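(* There is a constant $\eta_0<1$ such that the following holds: if $\eta>0$ and for every sufficiently large $k$ there are homogeneous polynomials $p_k,q_k$ of degree $k$ in two complex variables such that $(p_k,q_k)$ maps the unit sphere $S^3\subset\mathbb{C}^2$ into the annulus $\{w\in\mathbb{C}^2:\eta\le|w|\le1\}$ of outer radius $1$ and inner radius $\eta$, then $\eta\le\eta_0$. *)

theory Defs
  imports Complex_Main
begin

definition hom_poly2 :: "nat \<Rightarrow> (complex \<Rightarrow> complex \<Rightarrow> complex) \<Rightarrow> bool" where
  "hom_poly2 k p \<longleftrightarrow>
     (\<exists>c :: nat \<Rightarrow> complex. \<forall>z1 z2. p z1 z2 = (\<Sum>j\<le>k. c j * z1 ^ j * z2 ^ (k - j)))"

definition norm2 :: "complex \<Rightarrow> complex \<Rightarrow> real" where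
  "norm2 z1 z2 = sqrt ((cmod z1)\<^sup>2 + (cmod z2)\<^sup>2)"

end

(*
  Dehomogenising in the two affine charts of the projective line turns (p, q) into pairs of
  polynomials (P, Q) with eta^2 (1 + |z|^2)^k <= |P z|^2 + |Q z|^2 <= (1 + |z|^2)^k.
  The Wronskian P Q' - P' Q is a binary form of degree 2k - 2 > 0, so it vanishes at a point l
  of the closed unit disc of one of the charts. A unitary change of (P, Q) makes the second
  component vanish to second order at l; divided by the k-th power of a recentring factor,
  both components are bounded by 2 (1 + |l|^2)^(k/2) on the disc of radius (2k)^(-1/2)
  around l. Cauchy estimates on the disc of a tenth of that radius and the minimum modulus
  principle for the first component give a point where |P|^2 + |Q|^2 is at most 1 + 1/2025
  times the weight, while the lower bound there is eta^2 (1 + 1/848) times it. Hence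
  eta <= 0.9999.
*)

theory Submission
  imports Defs "HOL-Complex_Analysis.Complex_Analysis" "HOL-Computational_Algebra.Fundamental_Theorem_Algebra"
begin

section \<open>Estimates for holomorphic functions on a disc\<close>

lemma holomorphic_norm_le_vanishing_derivs:
  fixes f :: "complex \<Rightarrow> complex"
  assumes holf: "f holomorphic_on ball 0 r" and "R < r" and "0 < R"
    and bound: "\<And>z. norm z = R \<Longrightarrow> norm (f z) \<le> M"
    and vanish: "\<And>j. j < m \<Longrightarrow> (deriv ^^ j) f 0 = 0"
    and w: "norm w \<le> t * R" and "0 \<le> t" "t < 1"
  shows "norm (f w) \<le> M * t ^ m / (1 - t)"
proof -
  define a where "a n = (deriv ^^ n) f 0 * w ^ n / fact n" for n
  have "t * R < R"
    using \<open>t < 1\<close> \<open>0 < R\<close> by simp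
  then have "w \<in> ball 0 r"
    using w \<open>R < r\<close> by simp
  then have "a sums f w"
    using holomorphic_power_series[OF holf] unfolding a_def[abs_def] by simp
  then have tail: "(\<lambda>n. a (n + m)) sums f w"
    by (subst sums_zero_iff_shift) (auto simp: a_def vanish)
  have "M \<ge> 0"
    using order_trans[OF norm_ge_zero bound[of "of_real R"]] \<open>0 < R\<close> by simp
  have Cauchy: "norm ((deriv ^^ n) f 0) \<le> fact n * M / R ^ n" for n
  proof (rule Cauchy_inequality)
    show "f holomorphic_on ball 0 R"
      by (rule holomorphic_on_subset[OF holf]) (use \<open>R < r\<close> in auto)
    show "continuous_on (cball 0 R) f"
      by (rule holomorphic_on_imp_continuous_on, rule holomorphic_on_subset[OF holf]) (use \<open>R < r\<close> in auto)
  qed (use bound \<open>0 < R\<close> in auto)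
  have a_le: "norm (a n) \<le> M * t ^ n" for n
  proof -
    have "norm (a n) = norm ((deriv ^^ n) f 0) / fact n * norm w ^ n"
      by (simp add: a_def norm_mult norm_divide norm_power)
    also have "\<dots> \<le> (fact n * M / R ^ n) / fact n * (t * R) ^ n"
      by (intro mult_mono divide_right_mono Cauchy power_mono w) (use \<open>M \<ge> 0\<close> \<open>0 < R\<close> in auto)
    also have "\<dots> = M * t ^ n"
      using \<open>0 < R\<close> by (simp add: power_mult_distrib)
    finally show ?thesis .
  qed
  have geom: "(\<lambda>n. M * t ^ m * t ^ n) sums (M * t ^ m / (1 - t))"
    using geometric_sums[of t] \<open>0 \<le> t\<close> \<open>t < 1\<close> sums_mult[of "\<lambda>n. t ^ n" "1 / (1 - t)" "M * t ^ m"]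
    by auto
  have "norm (f w) = norm (\<Sum>n. a (n + m))"
    using tail sums_unique by metis
  also have "\<dots> \<le> (\<Sum>n. M * t ^ m * t ^ n)"
  proof (rule norm_suminf_le)
    show "norm (a (n + m)) \<le> M * t ^ m * t ^ n" for n
      using a_le[of "n + m"] by (simp add: power_add mult_ac)
    show "summable (\<lambda>n. M * t ^ m * t ^ n)"
      using geom sums_summable by blast
  qed
  also have "\<dots> = M * t ^ m / (1 - t)"
    using geom sums_unique by metis
  finally show ?thesis .
qed

lemma minimum_modulus_on_sphere:
  fixes G :: "complex \<Rightarrow> complex"
  assumes holG: "G holomorphic_on ball 0 r" and "\<rho> < r" and "0 < \<rho>"
    and nonzero: "\<And>w. norm w \<le> \<rho> \<Longrightarrow> G w \<noteq> 0"
  shows "\<exists>w. norm w = \<rho> \<and> norm (G w) \<le> norm (G 0)"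
proof -
  have "continuous_on (cball 0 \<rho>) G"
    using \<open>\<rho> < r\<close> by (intro holomorphic_on_imp_continuous_on holomorphic_on_subset[OF holG]) auto
  then have cont: "continuous_on (cball 0 \<rho>) (\<lambda>w. inverse (G w))"
    using nonzero by (intro continuous_on_inverse) auto
  have hol: "(\<lambda>w. inverse (G w)) holomorphic_on ball 0 \<rho>"
    using nonzero \<open>\<rho> < r\<close> by (intro holomorphic_on_inverse holomorphic_on_subset[OF holG]) auto
  have "continuous_on (sphere 0 \<rho>) (\<lambda>w. norm (inverse (G w)))"
    by (intro continuous_on_norm continuous_on_subset[OF cont]) auto
  moreover have "sphere (0::complex) \<rho> \<noteq> {}"
    using \<open>0 < \<rho>\<close> by auto
  ultimately obtain x where x: "x \<in> sphere 0 \<rho>"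
    and x_max: "\<And>y. y \<in> sphere 0 \<rho> \<Longrightarrow> norm (inverse (G y)) \<le> norm (inverse (G x))"
    using continuous_attains_sup[OF compact_sphere] by blast
  have "norm (inverse (G 0)) \<le> norm (inverse (G x))"
  proof (rule maximum_modulus_frontier[where S="ball 0 \<rho>" and f="\<lambda>w. inverse (G w)" and \<xi>=0])
    show "(\<lambda>w. inverse (G w)) holomorphic_on interior (ball 0 \<rho>)"
      using hol by simp
    show "continuous_on (closure (ball 0 \<rho>)) (\<lambda>w. inverse (G w))"
      using cont \<open>0 < \<rho>\<close> by simp
    show "norm (inverse (G z)) \<le> norm (inverse (G x))" if "z \<in> frontier (ball 0 \<rho>)" for z
      using that \<open>0 < \<rho>\<close> x_max by simp
  qed (use \<open>0 < \<rho>\<close> in auto)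
  moreover have "norm x = \<rho>"
    using x by simp
  ultimately have "norm (G x) \<le> norm (G 0)"
    using nonzero[of 0] nonzero[of x] \<open>0 < \<rho>\<close> by (simp add: norm_inverse)
  with \<open>norm x = \<rho>\<close> show ?thesis
    by blast
qed

lemma small_value_on_circle:
  fixes G B :: "complex \<Rightarrow> complex" and R s :: real
  assumes holG: "G holomorphic_on ball 0 1" and holB: "B holomorphic_on ball 0 1"
    and "0 < R" "R < 1"
    and G_le: "\<And>w. cmod w = R \<Longrightarrow> cmod (G w) \<le> 2 * s"
    and B_le: "\<And>w. cmod w = R \<Longrightarrow> cmod (B w) \<le> 2 * s"
    and G0: "s / 3 < cmod (G 0)" "cmod (G 0) \<le> s"
    and "B 0 = 0" "deriv B 0 = 0"
  shows "\<exists>w. cmod w = R / 10 \<and> (cmod (G w))\<^sup>2 + (cmod (B w))\<^sup>2 \<le> s\<^sup>2 * (1 + 1 / 2025)"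
proof -
  have G_near: "cmod (G w - G 0) \<le> s / 3" if "cmod w \<le> R / 10" for w
  proof -
    have "cmod (G w - G 0) \<le> (3 * s) * (1 / 10) ^ 1 / (1 - 1 / 10)"
    proof (rule holomorphic_norm_le_vanishing_derivs[where f = "\<lambda>w. G w - G 0", OF _ \<open>R < 1\<close> \<open>0 < R\<close>])
      show "(\<lambda>w. G w - G 0) holomorphic_on ball 0 1"
        using holG by (intro holomorphic_intros)
      show "cmod (G z - G 0) \<le> 3 * s" if "cmod z = R" for z
        using G_le[OF that] G0 norm_triangle_ineq4[of "G z" "G 0"] by linarith
    qed (use that in auto)
    then show ?thesis
      by simp
  qed
  have "G w \<noteq> 0" if "cmod w \<le> R / 10" for w
    using G_near[OF that] G0 by auto
  then obtain w where w: "cmod w = R / 10" and "cmod (G w) \<le> cmod (G 0)"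
    using minimum_modulus_on_sphere[OF holG, of "R / 10"] \<open>0 < R\<close> \<open>R < 1\<close> by auto
  then have "(cmod (G w))\<^sup>2 \<le> s\<^sup>2"
    using G0 by (intro power_mono) auto
  have "cmod (B w) \<le> (2 * s) * (1 / 10) ^ 2 / (1 - 1 / 10)"
  proof (rule holomorphic_norm_le_vanishing_derivs[OF holB \<open>R < 1\<close> \<open>0 < R\<close> B_le])
    show "(deriv ^^ j) B 0 = 0" if "j < 2" for j
      using that \<open>B 0 = 0\<close> \<open>deriv B 0 = 0\<close> by (cases j) (auto simp: less_Suc_eq)
  qed (use w in auto)
  then have "(cmod (B w))\<^sup>2 \<le> (s / 45)\<^sup>2"
    by (intro power_mono) (auto simp: power2_eq_square)
  with \<open>(cmod (G w))\<^sup>2 \<le> s\<^sup>2\<close> w show ?thesis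
    by (auto simp: field_simps)
qed

section \<open>Recentring at a point\<close>

text \<open>\<open>(1 + cmod l ^ 2) * recentring_factor l w\<close> is the Hermitian product of \<open>(1, l + w)\<close>
  with \<open>(1, l)\<close>, so \<open>one_plus_cmod_add_sq\<close> below is Pythagoras for \<open>(1, l + w)\<close> decomposed
  along \<open>(1, l)\<close> and its orthogonal complement.\<close>

definition recentring_factor :: "complex \<Rightarrow> complex \<Rightarrow> complex" where
  "recentring_factor l w = 1 + cnj l * w / of_real (1 + (cmod l)\<^sup>2)"

lemma recentring_factor_0 [simp]: "recentring_factor l 0 = 1"
  by (simp add: recentring_factor_def)

lemma one_plus_cmod_add_sq:
  "1 + (cmod (l + w))\<^sup>2 =
     (1 + (cmod l)\<^sup>2) * (cmod (recentring_factor l w))\<^sup>2 + (cmod w)\<^sup>2 / (1 + (cmod l)\<^sup>2)"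
proof -
  define a where "a = 1 + (cmod l)\<^sup>2"
  define b where "b = complex_of_real a"
  have b: "b = 1 + l * cnj l"
    using complex_norm_square[of l] by (simp add: a_def b_def)
  have "a > 0"
    by (simp add: a_def add_pos_nonneg)
  then have "b \<noteq> 0"
    by (simp add: b_def)
  have "complex_of_real (a * (cmod (recentring_factor l w))\<^sup>2 + (cmod w)\<^sup>2 / a) =
      b * ((1 + cnj l * w / b) * (1 + l * cnj w / b)) + w * cnj w / b"
    unfolding of_real_add of_real_mult of_real_divide complex_norm_square
    by (simp add: recentring_factor_def a_def[symmetric] b_def)
  also have "\<dots> = ((b + cnj l * w) * (b + l * cnj w) + w * cnj w) / b"
    using \<open>b \<noteq> 0\<close> by (simp add: field_simps power2_eq_square)
  also have "(b + cnj l * w) * (b + l * cnj w) + w * cnj w = b * (1 + (l + w) * (cnj l + cnj w))"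
    unfolding b by algebra
  also have "b * (1 + (l + w) * (cnj l + cnj w)) / b = complex_of_real (1 + (cmod (l + w))\<^sup>2)"
    using \<open>b \<noteq> 0\<close> complex_norm_square[of "l + w"] by simp
  finally show ?thesis
    unfolding a_def of_real_eq_iff by simp
qed

lemma norm_recentring_factor_diff_one: "cmod (recentring_factor l w - 1) \<le> cmod w / 2"
proof -
  define a where "a = 1 + (cmod l)\<^sup>2"
  have "2 * cmod l \<le> a"
    using sum_squares_bound[of "cmod l" 1] by (simp add: a_def power2_eq_square)
  then have "cmod l * cmod w \<le> a * cmod w / 2"
    using mult_right_mono[of "2 * cmod l" a "cmod w"] by simp
  moreover have "a > 0"
    by (simp add: a_def add_pos_nonneg)
  ultimately show ?thesis
    unfolding recentring_factor_def a_def[symmetric]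
    by (simp add: norm_mult norm_divide field_simps)
qed

lemma recentring_factor_bounds:
  shows "1 - cmod w / 2 \<le> cmod (recentring_factor l w)"
    and "cmod (recentring_factor l w) \<le> 1 + cmod w / 2"
  using norm_recentring_factor_diff_one[of l w]
    norm_triangle_ineq[of "1 - recentring_factor l w" "recentring_factor l w"]
    norm_triangle_ineq[of "recentring_factor l w - 1" 1]
  by (auto simp: norm_minus_commute)

lemma recentring_factor_nonzero: "cmod w < 2 \<Longrightarrow> recentring_factor l w \<noteq> 0"
  using recentring_factor_bounds(1)[of w l] by auto

lemma inverse_sqrt_double_le_half:
  assumes "2 \<le> k"
  shows "1 / sqrt (2 * real k) \<le> 1 / 2"
proof -
  have "2 \<le> sqrt (2 * real k)"
    using real_sqrt_le_mono[of 4 "2 * real k"] assms by simp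
  then show ?thesis
    by (intro divide_left_mono) (use assms in auto)
qed

lemma recentred_weight_le:
  assumes "2 \<le> k" and w: "cmod w \<le> 1 / sqrt (2 * real k)"
  shows "(1 + (cmod (l + w))\<^sup>2) ^ k \<le> 3 * ((1 + (cmod l)\<^sup>2) * (cmod (recentring_factor l w))\<^sup>2) ^ k"
proof -
  define a where "a = 1 + (cmod l)\<^sup>2"
  define X where "X = (cmod (recentring_factor l w))\<^sup>2"
  define Y where "Y = (cmod w)\<^sup>2 / (a\<^sup>2 * X)"
  have "1 \<le> a"
    by (simp add: a_def)
  have w_sq: "(cmod w)\<^sup>2 \<le> 1 / (2 * k)"
    using power_mono[OF w norm_ge_zero, of 2] by (simp add: power_divide)
  have "cmod w \<le> 1 / 2"
    using w inverse_sqrt_double_le_half[OF \<open>2 \<le> k\<close>] by linarith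
  then have "(3 / 4)\<^sup>2 \<le> X"
    unfolding X_def using recentring_factor_bounds(1)[of w l] by (intro power_mono) auto
  then have "1 / 2 \<le> X"
    by (simp add: power2_eq_square)
  have "Y \<le> 1 / real k"
  proof -
    have "a\<^sup>2 * X \<ge> 1 / 2"
      using \<open>1 \<le> a\<close> \<open>1 / 2 \<le> X\<close> mult_mono[of 1 "a\<^sup>2" "1 / 2" X] by simp
    then have "Y \<le> (cmod w)\<^sup>2 / (1 / 2)"
      unfolding Y_def by (intro divide_left_mono) auto
    with w_sq show ?thesis
      by (simp add: field_simps)
  qed
  then have "(1 + Y) ^ k \<le> (1 + 1 / k) ^ k"
    by (intro power_mono) (auto simp: Y_def X_def)
  also have "\<dots> \<le> exp 1"
    using exp_ge_one_plus_x_over_n_power_n[where x=1 and n=k] \<open>2 \<le> k\<close> by fastforce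
  also have "\<dots> \<le> 3"
    by (rule exp_le)
  finally have "(1 + Y) ^ k \<le> 3" .
  have "1 + (cmod (l + w))\<^sup>2 = a * X * (1 + Y)"
    unfolding one_plus_cmod_add_sq a_def[symmetric] X_def[symmetric] Y_def
    using \<open>1 \<le> a\<close> \<open>1 / 2 \<le> X\<close> by (simp add: field_simps power2_eq_square)
  then have "(1 + (cmod (l + w))\<^sup>2) ^ k = (a * X) ^ k * (1 + Y) ^ k"
    by (simp add: power_mult_distrib)
  also have "\<dots> \<le> (a * X) ^ k * 3"
    using \<open>(1 + Y) ^ k \<le> 3\<close> \<open>1 \<le> a\<close> by (intro mult_left_mono) (auto simp: X_def)
  finally show ?thesis
    unfolding a_def X_def by (simp add: mult.commute)
qed

lemma recentred_weight_ge:
  assumes "cmod l \<le> 1" "2 \<le> k" and w: "cmod w = 1 / (10 * sqrt (2 * real k))"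
  shows "(1 + 1 / 848) * ((1 + (cmod l)\<^sup>2) * (cmod (recentring_factor l w))\<^sup>2) ^ k
    \<le> (1 + (cmod (l + w))\<^sup>2) ^ k"
proof -
  define a where "a = 1 + (cmod l)\<^sup>2"
  define X where "X = (cmod (recentring_factor l w))\<^sup>2"
  define Z where "Z = (cmod w)\<^sup>2 / (a\<^sup>2 * X)"
  have "1 \<le> a" "a \<le> 2"
    using assms(1) by (auto simp: a_def power_le_one)
  have "cmod w = 1 / 10 * (1 / sqrt (2 * real k))"
    unfolding w by simp
  with inverse_sqrt_double_le_half[OF \<open>2 \<le> k\<close>] have "cmod w \<le> 1 / 20"
    by linarith
  then have "X \<le> (1 + 1 / 40)\<^sup>2"
    unfolding X_def using recentring_factor_bounds(2)[of l w] by (intro power_mono) auto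
  moreover have "a\<^sup>2 \<le> 2\<^sup>2"
    using \<open>a \<le> 2\<close> \<open>1 \<le> a\<close> by (intro power_mono) auto
  ultimately have "a\<^sup>2 * X \<le> 2\<^sup>2 * (1 + 1 / 40)\<^sup>2"
    by (intro mult_mono) (auto simp: X_def)
  moreover have "0 < X"
    using recentring_factor_nonzero[of w l] \<open>cmod w \<le> 1 / 20\<close> by (simp add: X_def)
  moreover have kZ: "k * Z = (1 / 200) / (a\<^sup>2 * X)"
    using \<open>2 \<le> k\<close> by (simp add: Z_def w power_divide power_mult_distrib)
  ultimately have "(1 / 200) / (2\<^sup>2 * (1 + 1 / 40)\<^sup>2) \<le> k * Z"
    unfolding kZ using \<open>1 \<le> a\<close> by (intro divide_left_mono) auto
  moreover have "(1 / 848 :: real) \<le> (1 / 200) / (2\<^sup>2 * (1 + 1 / 40)\<^sup>2)"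
    by (simp add: power2_eq_square)
  ultimately have "1 / 848 \<le> k * Z"
    by linarith
  moreover have "0 \<le> Z"
    unfolding Z_def X_def by (intro divide_nonneg_nonneg) auto
  ultimately have "1 + 1 / 848 \<le> (1 + Z) ^ k"
    using Bernoulli_inequality[of Z k] by linarith
  then have "(1 + 1 / 848) * (a * X) ^ k \<le> (1 + Z) ^ k * (a * X) ^ k"
    using \<open>1 \<le> a\<close> by (intro mult_right_mono) (auto simp: X_def)
  also have "\<dots> = (1 + (cmod (l + w))\<^sup>2) ^ k"
    unfolding one_plus_cmod_add_sq a_def[symmetric] X_def[symmetric] Z_def
    using \<open>1 \<le> a\<close> \<open>0 < X\<close> by (simp add: field_simps power2_eq_square)
  finally show ?thesis
    unfolding a_def X_def .
qed

lemma recentred_quotient_holomorphic: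
  assumes "A holomorphic_on UNIV"
  shows "(\<lambda>w. A (l + w) / recentring_factor l w ^ k) holomorphic_on ball 0 1"
proof -
  have "A holomorphic_on range (\<lambda>w. l + w)"
    using assms by (rule holomorphic_on_subset) simp
  then have "(A \<circ> (\<lambda>w. l + w)) holomorphic_on UNIV"
    by (intro holomorphic_on_compose holomorphic_intros)
  then have "(\<lambda>w. A (l + w)) holomorphic_on ball 0 1"
    unfolding o_def by (rule holomorphic_on_subset) simp
  then show ?thesis
    unfolding recentring_factor_def using recentring_factor_nonzero[unfolded recentring_factor_def]
    by (auto intro!: holomorphic_intros)
qed

lemma deriv_recentred_quotient_0:
  assumes "B l = 0" and "(B has_field_derivative 0) (at l)"
  shows "deriv (\<lambda>w. B (l + w) / recentring_factor l w ^ k) 0 = 0"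
proof -
  define a where "a = 1 + (cmod l)\<^sup>2"
  have "a > 0"
    by (simp add: a_def add_pos_nonneg)
  have "((\<lambda>w. B (l + w)) has_field_derivative 0) (at 0)"
    using DERIV_shift[of B 0 0 l] assms(2) by (simp add: add.commute)
  moreover have "((\<lambda>w. recentring_factor l w ^ k) has_field_derivative
      of_nat k * (cnj l / of_real a)) (at 0)"
    unfolding recentring_factor_def a_def[symmetric] using \<open>a > 0\<close>
    by (auto intro!: derivative_eq_intros)
  ultimately have "((\<lambda>w. B (l + w) / recentring_factor l w ^ k) has_field_derivative 0) (at 0)"
    using DERIV_divide[of "\<lambda>w. B (l + w)" 0 0] assms(1) by (auto intro!: derivative_eq_intros)
  then show ?thesis
    by (rule DERIV_imp_deriv)
qed

lemma norm_recentred_quotient_sq: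
  "(cmod (A (l + w) / recentring_factor l w ^ k))\<^sup>2 + (cmod (B (l + w) / recentring_factor l w ^ k))\<^sup>2
    = ((cmod (A (l + w)))\<^sup>2 + (cmod (B (l + w)))\<^sup>2) / ((cmod (recentring_factor l w))\<^sup>2) ^ k"
  by (simp add: norm_divide norm_power power_divide add_divide_distrib power_mult [symmetric] mult.commute)

lemma recentred_quotient_bound:
  assumes upper: "\<And>z. (cmod (A z))\<^sup>2 + (cmod (B z))\<^sup>2 \<le> (1 + (cmod z)\<^sup>2) ^ k"
    and "2 \<le> k" and w: "cmod w \<le> 1 / sqrt (2 * real k)"
  shows "cmod (A (l + w) / recentring_factor l w ^ k) \<le> 2 * sqrt ((1 + (cmod l)\<^sup>2) ^ k)"
    and "cmod (B (l + w) / recentring_factor l w ^ k) \<le> 2 * sqrt ((1 + (cmod l)\<^sup>2) ^ k)"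
proof -
  define X where "X = (cmod (recentring_factor l w))\<^sup>2"
  have "cmod w < 2"
    using w inverse_sqrt_double_le_half[OF \<open>2 \<le> k\<close>] by linarith
  then have "0 < X"
    using recentring_factor_nonzero[of w l] by (simp add: X_def)
  have "(1 + (cmod (l + w))\<^sup>2) ^ k \<le> 3 * (1 + (cmod l)\<^sup>2) ^ k * X ^ k"
    using recentred_weight_le[OF \<open>2 \<le> k\<close> w, of l] by (simp add: X_def power_mult_distrib mult.assoc)
  then have "((cmod (A (l + w)))\<^sup>2 + (cmod (B (l + w)))\<^sup>2) / X ^ k \<le> 3 * (1 + (cmod l)\<^sup>2) ^ k"
    using upper[of "l + w"] \<open>0 < X\<close> by (simp add: pos_divide_le_eq)
  also have "\<dots> \<le> (2 * sqrt ((1 + (cmod l)\<^sup>2) ^ k))\<^sup>2"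
    by (simp add: power_mult_distrib)
  finally have "(cmod (A (l + w) / recentring_factor l w ^ k))\<^sup>2 \<le> (2 * sqrt ((1 + (cmod l)\<^sup>2) ^ k))\<^sup>2 \<and>
      (cmod (B (l + w) / recentring_factor l w ^ k))\<^sup>2 \<le> (2 * sqrt ((1 + (cmod l)\<^sup>2) ^ k))\<^sup>2"
    unfolding X_def norm_recentred_quotient_sq[symmetric]
    using zero_le_power2[of "cmod (A (l + w) / recentring_factor l w ^ k)"]
      zero_le_power2[of "cmod (B (l + w) / recentring_factor l w ^ k)"] by linarith
  then show "cmod (A (l + w) / recentring_factor l w ^ k) \<le> 2 * sqrt ((1 + (cmod l)\<^sup>2) ^ k)"
    and "cmod (B (l + w) / recentring_factor l w ^ k) \<le> 2 * sqrt ((1 + (cmod l)\<^sup>2) ^ k)"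
    by (auto intro: power2_le_imp_le)
qed

section \<open>No critical point in the unit disc\<close>

lemma critical_point_rotation:
  fixes P Q :: "complex \<Rightarrow> complex"
  assumes holP: "P holomorphic_on UNIV" and holQ: "Q holomorphic_on UNIV"
    and dP: "(P has_field_derivative P') (at l)" and dQ: "(Q has_field_derivative Q') (at l)"
    and critical: "P l * Q' = P' * Q l"
    and nonzero: "(cmod (P l))\<^sup>2 + (cmod (Q l))\<^sup>2 \<noteq> 0"
  obtains A B where "A holomorphic_on UNIV" "B holomorphic_on UNIV"
    and "\<And>z. (cmod (A z))\<^sup>2 + (cmod (B z))\<^sup>2 = (cmod (P z))\<^sup>2 + (cmod (Q z))\<^sup>2"
    and "A l = sqrt ((cmod (P l))\<^sup>2 + (cmod (Q l))\<^sup>2)"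
    and "B l = 0" and "(B has_field_derivative 0) (at l)"
proof
  define g where "g = sqrt ((cmod (P l))\<^sup>2 + (cmod (Q l))\<^sup>2)"
  have "g > 0"
    using nonzero by (simp add: g_def order_le_neq_trans)
  have g_sq: "g\<^sup>2 = (cmod (P l))\<^sup>2 + (cmod (Q l))\<^sup>2"
    by (simp add: g_def)
  define A where "A z = (cnj (P l) * P z + cnj (Q l) * Q z) / g" for z
  define B where "B z = (Q l * P z - P l * Q z) / g" for z
  show "A holomorphic_on UNIV" "B holomorphic_on UNIV"
    unfolding A_def B_def using holP holQ \<open>g > 0\<close> by (auto intro!: holomorphic_intros)
  show "(cmod (A z))\<^sup>2 + (cmod (B z))\<^sup>2 = (cmod (P z))\<^sup>2 + (cmod (Q z))\<^sup>2" for z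
  proof -
    have "(cmod (cnj (P l) * P z + cnj (Q l) * Q z))\<^sup>2 + (cmod (Q l * P z - P l * Q z))\<^sup>2
        = g\<^sup>2 * ((cmod (P z))\<^sup>2 + (cmod (Q z))\<^sup>2)"
      unfolding g_sq cmod_power2 by (simp add: power2_eq_square algebra_simps)
    then show ?thesis
      unfolding A_def B_def norm_divide power_divide using \<open>g > 0\<close> by (simp add: add_divide_distrib [symmetric])
  qed
  have "cnj (P l) * P l + cnj (Q l) * Q l = of_real (g\<^sup>2)"
    unfolding g_sq of_real_add complex_norm_square by (simp add: mult.commute)
  then show "A l = g"
    unfolding A_def using \<open>g > 0\<close> by (simp add: power2_eq_square)
  show "B l = 0"
    by (simp add: B_def mult.commute)
  have "(B has_field_derivative (Q l * P' - P l * Q') / g) (at l)"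
    unfolding B_def[abs_def] using dP dQ \<open>g > 0\<close> by (auto intro!: derivative_eq_intros)
  then show "(B has_field_derivative 0) (at l)"
    using critical by (simp add: mult.commute)
qed

lemma recentred_small_value:
  fixes A B :: "complex \<Rightarrow> complex"
  assumes holA: "A holomorphic_on UNIV" and holB: "B holomorphic_on UNIV"
    and upper: "\<And>z. (cmod (A z))\<^sup>2 + (cmod (B z))\<^sup>2 \<le> (1 + (cmod z)\<^sup>2) ^ k" and "2 \<le> k"
    and A_l: "sqrt ((1 + (cmod l)\<^sup>2) ^ k) / 3 < cmod (A l)" "cmod (A l) \<le> sqrt ((1 + (cmod l)\<^sup>2) ^ k)"
    and "B l = 0" and dB: "(B has_field_derivative 0) (at l)"
  obtains w where "cmod w = 1 / (10 * sqrt (2 * real k))"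
    and "(cmod (A (l + w)))\<^sup>2 + (cmod (B (l + w)))\<^sup>2
      \<le> (1 + 1 / 2025) * ((1 + (cmod l)\<^sup>2) * (cmod (recentring_factor l w))\<^sup>2) ^ k"
proof -
  define s where "s = sqrt ((1 + (cmod l)\<^sup>2) ^ k)"
  have s_sq: "s\<^sup>2 = (1 + (cmod l)\<^sup>2) ^ k"
    by (simp add: s_def)
  define G where "G w = A (l + w) / recentring_factor l w ^ k" for w
  define H where "H w = B (l + w) / recentring_factor l w ^ k" for w
  define R where "R = 1 / sqrt (2 * real k)"
  have "0 < R" "R < 1"
    using \<open>2 \<le> k\<close> by (auto simp: R_def)
  have "\<And>w. cmod w = R \<Longrightarrow> cmod (G w) \<le> 2 * s" "\<And>w. cmod w = R \<Longrightarrow> cmod (H w) \<le> 2 * s"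
    using recentred_quotient_bound[OF upper \<open>2 \<le> k\<close>] by (simp_all add: G_def H_def R_def s_def)
  moreover have "G holomorphic_on ball 0 1" "H holomorphic_on ball 0 1"
    unfolding G_def[abs_def] H_def[abs_def] by (intro recentred_quotient_holomorphic holA holB)+
  moreover have "s / 3 < cmod (G 0)" "cmod (G 0) \<le> s"
    using A_l by (simp_all add: G_def s_def)
  moreover have "H 0 = 0" "deriv H 0 = 0"
    using deriv_recentred_quotient_0[OF \<open>B l = 0\<close> dB] by (simp_all add: H_def[abs_def] \<open>B l = 0\<close>)
  ultimately obtain w where w: "cmod w = R / 10"
    and small: "(cmod (G w))\<^sup>2 + (cmod (H w))\<^sup>2 \<le> s\<^sup>2 * (1 + 1 / 2025)"
    using small_value_on_circle[of G H R s] \<open>0 < R\<close> \<open>R < 1\<close> by blast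
  define X where "X = (cmod (recentring_factor l w))\<^sup>2"
  have "0 < X"
    using recentring_factor_nonzero[of w l] \<open>R < 1\<close> w by (simp add: X_def)
  have "(cmod (A (l + w)))\<^sup>2 + (cmod (B (l + w)))\<^sup>2 = X ^ k * ((cmod (G w))\<^sup>2 + (cmod (H w))\<^sup>2)"
    unfolding G_def H_def norm_recentred_quotient_sq X_def[symmetric] using \<open>0 < X\<close> by simp
  also have "\<dots> \<le> X ^ k * (s\<^sup>2 * (1 + 1 / 2025))"
    using small \<open>0 < X\<close> by (intro mult_left_mono) auto
  also have "\<dots> = (1 + 1 / 2025) * ((1 + (cmod l)\<^sup>2) * X) ^ k"
    unfolding s_sq by (simp add: power_mult_distrib)
  finally show ?thesis
    using w unfolding X_def R_def by (intro that) simp_all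
qed

text \<open>For \<open>P z = p z 1\<close> and \<open>Q z = q z 1\<close> this is the hypothesis on the sphere at the point
  \<open>(z, 1) / norm2 z 1\<close>, by homogeneity.\<close>

definition chart_annulus :: "real \<Rightarrow> nat \<Rightarrow> (complex \<Rightarrow> complex) \<Rightarrow> (complex \<Rightarrow> complex) \<Rightarrow> bool" where
  "chart_annulus \<eta> k P Q \<longleftrightarrow>
     (\<forall>z. \<eta>\<^sup>2 * (1 + (cmod z)\<^sup>2) ^ k \<le> (cmod (P z))\<^sup>2 + (cmod (Q z))\<^sup>2 \<and>
          (cmod (P z))\<^sup>2 + (cmod (Q z))\<^sup>2 \<le> (1 + (cmod z)\<^sup>2) ^ k)"

lemma chart_annulus_sqrt_bounds:
  assumes "chart_annulus \<eta> k P Q" and "0 \<le> \<eta>"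
  shows "\<eta> * sqrt ((1 + (cmod z)\<^sup>2) ^ k) \<le> sqrt ((cmod (P z))\<^sup>2 + (cmod (Q z))\<^sup>2)"
    and "sqrt ((cmod (P z))\<^sup>2 + (cmod (Q z))\<^sup>2) \<le> sqrt ((1 + (cmod z)\<^sup>2) ^ k)"
proof -
  have "\<eta>\<^sup>2 * (1 + (cmod z)\<^sup>2) ^ k \<le> (cmod (P z))\<^sup>2 + (cmod (Q z))\<^sup>2"
    and "(cmod (P z))\<^sup>2 + (cmod (Q z))\<^sup>2 \<le> (1 + (cmod z)\<^sup>2) ^ k"
    using assms(1) by (simp_all add: chart_annulus_def)
  then have "sqrt (\<eta>\<^sup>2 * (1 + (cmod z)\<^sup>2) ^ k) \<le> sqrt ((cmod (P z))\<^sup>2 + (cmod (Q z))\<^sup>2)"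
    and "sqrt ((cmod (P z))\<^sup>2 + (cmod (Q z))\<^sup>2) \<le> sqrt ((1 + (cmod z)\<^sup>2) ^ k)"
    by (simp_all only: real_sqrt_le_mono)
  with \<open>0 \<le> \<eta>\<close> show "\<eta> * sqrt ((1 + (cmod z)\<^sup>2) ^ k) \<le> sqrt ((cmod (P z))\<^sup>2 + (cmod (Q z))\<^sup>2)"
    and "sqrt ((cmod (P z))\<^sup>2 + (cmod (Q z))\<^sup>2) \<le> sqrt ((1 + (cmod z)\<^sup>2) ^ k)"
    by (simp_all add: real_sqrt_mult)
qed

lemma critical_point_small_value:
  fixes P Q :: "complex \<Rightarrow> complex"
  assumes holP: "P holomorphic_on UNIV" and holQ: "Q holomorphic_on UNIV"
    and annulus: "chart_annulus \<eta> k P Q" and "2 \<le> k" and \<eta>: "1 / 3 < \<eta>"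
    and dP: "(P has_field_derivative P') (at l)" and dQ: "(Q has_field_derivative Q') (at l)"
    and critical: "P l * Q' = P' * Q l"
  obtains w where "cmod w = 1 / (10 * sqrt (2 * real k))"
    and "(cmod (P (l + w)))\<^sup>2 + (cmod (Q (l + w)))\<^sup>2
      \<le> (1 + 1 / 2025) * ((1 + (cmod l)\<^sup>2) * (cmod (recentring_factor l w))\<^sup>2) ^ k"
proof -
  define s where "s = sqrt ((1 + (cmod l)\<^sup>2) ^ k)"
  define g where "g = sqrt ((cmod (P l))\<^sup>2 + (cmod (Q l))\<^sup>2)"
  have "1 \<le> s"
    by (simp add: s_def)
  have "\<eta> * s \<le> g" "g \<le> s"
    using chart_annulus_sqrt_bounds[OF annulus, of l] \<eta> by (simp_all add: s_def g_def)
  moreover have "s / 3 < \<eta> * s"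
    using \<eta> \<open>1 \<le> s\<close> by simp
  ultimately have "s / 3 < g"
    by linarith
  then have "(cmod (P l))\<^sup>2 + (cmod (Q l))\<^sup>2 \<noteq> 0"
    using \<open>1 \<le> s\<close> by (auto simp: g_def)
  then obtain A B where holA: "A holomorphic_on UNIV" and holB: "B holomorphic_on UNIV"
    and AB: "\<And>z. (cmod (A z))\<^sup>2 + (cmod (B z))\<^sup>2 = (cmod (P z))\<^sup>2 + (cmod (Q z))\<^sup>2"
    and "A l = g" "B l = 0" and dB: "(B has_field_derivative 0) (at l)"
    using critical_point_rotation[OF holP holQ dP dQ critical] unfolding g_def[symmetric] by blast
  have upper: "(cmod (A z))\<^sup>2 + (cmod (B z))\<^sup>2 \<le> (1 + (cmod z)\<^sup>2) ^ k" for z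
    using annulus by (simp add: AB chart_annulus_def)
  have "s / 3 < cmod (A l)" "cmod (A l) \<le> s"
    using \<open>A l = g\<close> \<open>s / 3 < g\<close> \<open>g \<le> s\<close> by (simp_all add: g_def)
  then obtain w where "cmod w = 1 / (10 * sqrt (2 * real k))"
    and "(cmod (A (l + w)))\<^sup>2 + (cmod (B (l + w)))\<^sup>2
      \<le> (1 + 1 / 2025) * ((1 + (cmod l)\<^sup>2) * (cmod (recentring_factor l w))\<^sup>2) ^ k"
    using recentred_small_value[OF holA holB upper \<open>2 \<le> k\<close> _ _ \<open>B l = 0\<close> dB] unfolding s_def by blast
  then show ?thesis
    using that unfolding AB by blast
qed

lemma no_critical_point_in_unit_disc:
  fixes P Q :: "complex \<Rightarrow> complex"
  assumes holP: "P holomorphic_on UNIV" and holQ: "Q holomorphic_on UNIV"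
    and annulus: "chart_annulus \<eta> k P Q" and "2 \<le> k" and \<eta>: "9999 / 10000 < \<eta>"
    and "cmod l \<le> 1"
    and dP: "(P has_field_derivative P') (at l)" and dQ: "(Q has_field_derivative Q') (at l)"
  shows "P l * Q' \<noteq> P' * Q l"
proof
  assume "P l * Q' = P' * Q l"
  then obtain w where w: "cmod w = 1 / (10 * sqrt (2 * real k))"
    and upper: "(cmod (P (l + w)))\<^sup>2 + (cmod (Q (l + w)))\<^sup>2
      \<le> (1 + 1 / 2025) * ((1 + (cmod l)\<^sup>2) * (cmod (recentring_factor l w))\<^sup>2) ^ k"
    using critical_point_small_value[OF holP holQ annulus \<open>2 \<le> k\<close> _ dP dQ] \<eta> by force
  define Y where "Y = ((1 + (cmod l)\<^sup>2) * (cmod (recentring_factor l w))\<^sup>2) ^ k"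
  have "cmod w = 1 / 10 * (1 / sqrt (2 * real k))"
    unfolding w by simp
  with inverse_sqrt_double_le_half[OF \<open>2 \<le> k\<close>] have "0 < Y"
    using recentring_factor_nonzero[of w l] by (simp add: Y_def add_pos_nonneg)
  have "\<eta>\<^sup>2 * ((1 + 1 / 848) * Y) \<le> \<eta>\<^sup>2 * (1 + (cmod (l + w))\<^sup>2) ^ k"
    using recentred_weight_ge[OF \<open>cmod l \<le> 1\<close> \<open>2 \<le> k\<close> w] by (intro mult_left_mono) (auto simp: Y_def)
  also have "\<dots> \<le> (cmod (P (l + w)))\<^sup>2 + (cmod (Q (l + w)))\<^sup>2"
    using annulus by (simp add: chart_annulus_def)
  also have "\<dots> \<le> (1 + 1 / 2025) * Y"
    using upper by (simp add: Y_def)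
  finally have "\<eta>\<^sup>2 * (1 + 1 / 848) \<le> 1 + 1 / 2025"
    using \<open>0 < Y\<close> by (simp add: mult.assoc[symmetric])
  moreover have "(9999 / 10000)\<^sup>2 \<le> \<eta>\<^sup>2"
    using \<eta> by (intro power_mono) auto
  ultimately show False
    by (simp add: power2_eq_square)
qed

section \<open>Wronskians in the two charts\<close>

definition wronskian :: "'a::idom poly \<Rightarrow> 'a poly \<Rightarrow> 'a poly" where
  "wronskian P Q = P * pderiv Q - pderiv P * Q"

lemma wronskian_no_root_in_unit_disc:
  assumes "chart_annulus \<eta> k (poly P) (poly Q)" "2 \<le> k" "9999 / 10000 < \<eta>" "cmod z \<le> 1"
  shows "poly (wronskian P Q) z \<noteq> 0"
proof -
  have "poly R holomorphic_on UNIV" for R :: "complex poly"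
    using poly_holomorphic_on[of "\<lambda>z. z" UNIV R] by (auto intro: holomorphic_intros)
  then show ?thesis
    using no_critical_point_in_unit_disc[OF _ _ assms poly_DERIV poly_DERIV]
    by (simp add: wronskian_def mult.commute)
qed

lemma poly_reflect_DERIV:
  fixes P P' :: "complex poly"
  assumes reflect: "\<And>x. x \<noteq> 0 \<Longrightarrow> poly P' x = x ^ k * poly P (inverse x)" and "\<mu> \<noteq> 0"
  shows "poly (pderiv P') \<mu> =
    of_nat k * \<mu> ^ (k - 1) * poly P (inverse \<mu>) - \<mu> ^ k * poly (pderiv P) (inverse \<mu>) / \<mu>\<^sup>2"
proof -
  have "((\<lambda>x. x ^ k * poly P (inverse x)) has_field_derivative
      of_nat k * \<mu> ^ (k - 1) * poly P (inverse \<mu>) - \<mu> ^ k * poly (pderiv P) (inverse \<mu>) / \<mu>\<^sup>2) (at \<mu>)"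
    using \<open>\<mu> \<noteq> 0\<close> by (auto intro!: derivative_eq_intros DERIV_chain2[OF poly_DERIV]
        simp: power2_eq_square field_simps)
  then have "(poly P' has_field_derivative
      of_nat k * \<mu> ^ (k - 1) * poly P (inverse \<mu>) - \<mu> ^ k * poly (pderiv P) (inverse \<mu>) / \<mu>\<^sup>2) (at \<mu>)"
    by (rule has_field_derivative_transform_within_open[of _ _ _ "- {0}"]) (use assms in auto)
  then show ?thesis
    using DERIV_unique[OF poly_DERIV] by blast
qed

lemma poly_wronskian_reflect:
  fixes P Q P' Q' :: "complex poly"
  assumes "\<And>x. x \<noteq> 0 \<Longrightarrow> poly P' x = x ^ k * poly P (inverse x)"
    and "\<And>x. x \<noteq> 0 \<Longrightarrow> poly Q' x = x ^ k * poly Q (inverse x)"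
    and "\<mu> \<noteq> 0"
  shows "\<mu>\<^sup>2 * poly (wronskian P' Q') \<mu> = - (\<mu> ^ (2 * k) * poly (wronskian P Q) (inverse \<mu>))"
proof -
  define p q dp dq where "p = poly P (inverse \<mu>)" and "q = poly Q (inverse \<mu>)"
    and "dp = poly (pderiv P) (inverse \<mu>)" and "dq = poly (pderiv Q) (inverse \<mu>)"
  have "poly (wronskian P' Q') \<mu> =
      \<mu> ^ k * p * (of_nat k * \<mu> ^ (k - 1) * q - \<mu> ^ k * dq / \<mu>\<^sup>2)
      - (of_nat k * \<mu> ^ (k - 1) * p - \<mu> ^ k * dp / \<mu>\<^sup>2) * (\<mu> ^ k * q)"
    using assms by (simp add: wronskian_def poly_reflect_DERIV p_def q_def dp_def dq_def)
  also have "\<dots> = - (\<mu> ^ k * \<mu> ^ k) * (p * dq - dp * q) / \<mu>\<^sup>2"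
    by (simp add: algebra_simps diff_divide_distrib)
  finally show ?thesis
    using \<open>\<mu> \<noteq> 0\<close> by (simp add: wronskian_def p_def q_def dp_def dq_def mult_2 power_add)
qed

lemma root_in_unit_disc_or_reflected:
  fixes D E :: "complex poly"
  assumes reflect: "\<And>\<mu>. \<mu> \<noteq> 0 \<Longrightarrow> \<mu> ^ m * poly E \<mu> = c * \<mu> ^ n * poly D (inverse \<mu>)"
    and "m < n"
  shows "\<exists>z. cmod z \<le> 1 \<and> (poly D z = 0 \<or> poly E z = 0)"
proof (cases "\<exists>z. poly D z = 0")
  case True
  then obtain z where z: "poly D z = 0"
    by blast
  show ?thesis
  proof (cases "cmod z \<le> 1")
    case False
    then have "z \<noteq> 0" "cmod (inverse z) \<le> 1"
      by (auto simp: norm_inverse inverse_le_1_iff)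
    moreover have "poly E (inverse z) = 0"
      using reflect[of "inverse z"] z \<open>z \<noteq> 0\<close> by simp
    ultimately show ?thesis
      by blast
  qed (use z in blast)
next
  case False
  then have "constant (poly D)"
    using fundamental_theorem_of_algebra by blast
  then obtain d where d: "\<And>x. poly D x = d"
    unfolding constant_def by blast
  have "poly E \<mu> = c * d * \<mu> ^ (n - m)" if "\<mu> \<noteq> 0" for \<mu>
  proof -
    have "\<mu> ^ m * poly E \<mu> = \<mu> ^ m * (c * d * \<mu> ^ (n - m))"
      using reflect[OF that] d \<open>m < n\<close> by (simp add: power_add[symmetric] mult_ac)
    then show ?thesis
      using that by simp
  qed
  then have "\<forall>\<^sub>F \<mu> in at 0. poly E \<mu> = c * d * \<mu> ^ (n - m)"
    by (auto simp: eventually_at_filter)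
  then have "((\<lambda>\<mu>. c * d * \<mu> ^ (n - m)) \<longlongrightarrow> poly E 0) (at 0)"
    by (rule Lim_transform_eventually[OF poly_isCont[of 0 E, unfolded isCont_def]])
  moreover have "((\<lambda>\<mu>. c * d * \<mu> ^ (n - m)) \<longlongrightarrow> 0) (at (0::complex))"
    using \<open>m < n\<close> by (intro tendsto_eq_intros) auto
  ultimately have "poly E 0 = 0"
    by (rule tendsto_unique[OF at_neq_bot])
  then show ?thesis
    by (intro exI[of _ 0]) simp
qed

section \<open>Homogeneous polynomials in two variables\<close>

definition sphere_to_annulus ::
    "real \<Rightarrow> (complex \<Rightarrow> complex \<Rightarrow> complex) \<Rightarrow> (complex \<Rightarrow> complex \<Rightarrow> complex) \<Rightarrow> bool" where
  "sphere_to_annulus \<eta> p q \<longleftrightarrow>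
     (\<forall>z1 z2. norm2 z1 z2 = 1 \<longrightarrow> \<eta> \<le> norm2 (p z1 z2) (q z1 z2) \<and> norm2 (p z1 z2) (q z1 z2) \<le> 1)"

lemma norm2_power2: "(norm2 a b)\<^sup>2 = (cmod a)\<^sup>2 + (cmod b)\<^sup>2"
  by (simp add: norm2_def)

lemma norm2_nonneg: "0 \<le> norm2 a b"
  by (simp add: norm2_def)

lemma norm2_commute: "norm2 a b = norm2 b a"
  by (simp add: norm2_def add.commute)

lemma norm2_mult: "norm2 (t * a) (t * b) = cmod t * norm2 a b"
proof -
  have "(cmod (t * a))\<^sup>2 + (cmod (t * b))\<^sup>2 = (cmod t)\<^sup>2 * ((cmod a)\<^sup>2 + (cmod b)\<^sup>2)"
    by (simp add: norm_mult power_mult_distrib algebra_simps)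
  then show ?thesis
    by (simp add: norm2_def real_sqrt_mult)
qed

lemma hom_poly2_mult:
  assumes "hom_poly2 k p"
  shows "p (t * z1) (t * z2) = t ^ k * p z1 z2"
proof -
  obtain c where c: "\<And>z1 z2. p z1 z2 = (\<Sum>j\<le>k. c j * z1 ^ j * z2 ^ (k - j))"
    using assms unfolding hom_poly2_def by blast
  have "c j * (t * z1) ^ j * (t * z2) ^ (k - j) = t ^ k * (c j * z1 ^ j * z2 ^ (k - j))" if "j \<le> k" for j
  proof -
    have "t ^ k = t ^ j * t ^ (k - j)"
      using that by (simp flip: power_add)
    then show ?thesis
      by (simp add: power_mult_distrib mult_ac)
  qed
  then show ?thesis
    unfolding c sum_distrib_left by (intro sum.cong) auto
qed

lemma hom_poly2_swap:
  assumes "hom_poly2 k p"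
  shows "hom_poly2 k (\<lambda>z1 z2. p z2 z1)"
proof -
  obtain c where c: "\<And>z1 z2. p z1 z2 = (\<Sum>j\<le>k. c j * z1 ^ j * z2 ^ (k - j))"
    using assms unfolding hom_poly2_def by blast
  have "p z2 z1 = (\<Sum>j\<le>k. c (k - j) * z1 ^ j * z2 ^ (k - j))" for z1 z2
    unfolding c by (rule sum.reindex_bij_witness[where i="\<lambda>j. k - j" and j="\<lambda>j. k - j"]) (auto simp: mult_ac)
  then show ?thesis
    unfolding hom_poly2_def by (intro exI[of _ "\<lambda>j. c (k - j)"]) simp
qed

lemma hom_poly2_chart:
  assumes "hom_poly2 k p"
  obtains P where "poly P = (\<lambda>z. p z 1)"
proof -
  obtain c where c: "\<And>z1 z2. p z1 z2 = (\<Sum>j\<le>k. c j * z1 ^ j * z2 ^ (k - j))"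
    using assms unfolding hom_poly2_def by blast
  have "poly (\<Sum>j\<le>k. monom (c j) j) = (\<lambda>z. p z 1)"
    by (simp add: c poly_sum poly_monom fun_eq_iff)
  then show ?thesis
    using that by blast
qed

lemma sphere_to_annulus_swap:
  "sphere_to_annulus \<eta> p q \<Longrightarrow> sphere_to_annulus \<eta> (\<lambda>z1 z2. p z2 z1) (\<lambda>z1 z2. q z2 z1)"
  unfolding sphere_to_annulus_def by (metis norm2_commute)

lemma sphere_to_annulus_homogeneous:
  assumes "hom_poly2 k p" "hom_poly2 k q" "sphere_to_annulus \<eta> p q" and "norm2 z1 z2 \<noteq> 0"
  shows "\<eta> * norm2 z1 z2 ^ k \<le> norm2 (p z1 z2) (q z1 z2)"
    and "norm2 (p z1 z2) (q z1 z2) \<le> norm2 z1 z2 ^ k"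
proof -
  define n where "n = norm2 z1 z2"
  have "n > 0"
    using assms(4) norm2_nonneg[of z1 z2] by (simp add: n_def)
  define t where "t = complex_of_real (1 / n)"
  have "norm2 (t * z1) (t * z2) = 1"
    unfolding norm2_mult using \<open>n > 0\<close> by (simp add: t_def n_def norm_divide)
  moreover have "norm2 (p (t * z1) (t * z2)) (q (t * z1) (t * z2)) = norm2 (p z1 z2) (q z1 z2) / n ^ k"
    unfolding hom_poly2_mult[OF assms(1)] hom_poly2_mult[OF assms(2)] norm2_mult
    using \<open>n > 0\<close> by (simp add: t_def norm_power norm_divide power_divide)
  ultimately have "\<eta> \<le> norm2 (p z1 z2) (q z1 z2) / n ^ k" "norm2 (p z1 z2) (q z1 z2) / n ^ k \<le> 1"
    using assms(3) unfolding sphere_to_annulus_def by metis+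
  with \<open>n > 0\<close> show "\<eta> * n ^ k \<le> norm2 (p z1 z2) (q z1 z2)" "norm2 (p z1 z2) (q z1 z2) \<le> n ^ k"
    by (simp_all add: field_simps)
qed

lemma sphere_to_annulus_imp_chart_annulus:
  assumes "hom_poly2 k p" "hom_poly2 k q" "sphere_to_annulus \<eta> p q" "0 \<le> \<eta>"
  shows "chart_annulus \<eta> k (\<lambda>z. p z 1) (\<lambda>z. q z 1)"
  unfolding chart_annulus_def
proof
  fix z
  have n: "norm2 z 1 ^ 2 = 1 + (cmod z)\<^sup>2" "norm2 z 1 \<noteq> 0"
    using norm2_power2[of z 1] by (auto simp: norm2_def add_nonneg_eq_0_iff)
  have "(\<eta> * norm2 z 1 ^ k)\<^sup>2 \<le> (norm2 (p z 1) (q z 1))\<^sup>2"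
    using sphere_to_annulus_homogeneous(1)[OF assms(1-3) n(2)] \<open>0 \<le> \<eta>\<close>
    by (intro power_mono) (auto simp: norm2_def)
  moreover have "(norm2 (p z 1) (q z 1))\<^sup>2 \<le> (norm2 z 1 ^ k)\<^sup>2"
    using sphere_to_annulus_homogeneous(2)[OF assms(1-3) n(2)] by (intro power_mono) (auto simp: norm2_nonneg)
  moreover have "(norm2 z 1 ^ k)\<^sup>2 = (1 + (cmod z)\<^sup>2) ^ k"
    by (simp add: n(1)[symmetric] power_mult[symmetric] mult.commute)
  ultimately show "\<eta>\<^sup>2 * (1 + (cmod z)\<^sup>2) ^ k \<le> (cmod (p z 1))\<^sup>2 + (cmod (q z 1))\<^sup>2 \<and>
      (cmod (p z 1))\<^sup>2 + (cmod (q z 1))\<^sup>2 \<le> (1 + (cmod z)\<^sup>2) ^ k"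
    unfolding norm2_power2 power_mult_distrib by simp
qed

lemma hom_poly2_wronskian_root:
  assumes p: "hom_poly2 k p" and q: "hom_poly2 k q" and "2 \<le> k"
  obtains P Q z where "cmod z \<le> 1" "poly (wronskian P Q) z = 0"
    and "poly P = (\<lambda>x. p x 1) \<and> poly Q = (\<lambda>x. q x 1) \<or> poly P = (\<lambda>x. p 1 x) \<and> poly Q = (\<lambda>x. q 1 x)"
proof -
  obtain P Q P' Q' where P: "poly P = (\<lambda>x. p x 1)" and Q: "poly Q = (\<lambda>x. q x 1)"
    and P': "poly P' = (\<lambda>x. p 1 x)" and Q': "poly Q' = (\<lambda>x. q 1 x)"
    using hom_poly2_chart[OF p] hom_poly2_chart[OF q]
      hom_poly2_chart[OF hom_poly2_swap[OF p]] hom_poly2_chart[OF hom_poly2_swap[OF q]] by metis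
  have reflect: "f 1 x = x ^ k * f (inverse x) 1" if "hom_poly2 k f" "x \<noteq> 0" for f x
    using hom_poly2_mult[OF that(1), of x "inverse x" 1] that(2) by simp
  have "\<mu>\<^sup>2 * poly (wronskian P' Q') \<mu> = - 1 * \<mu> ^ (2 * k) * poly (wronskian P Q) (inverse \<mu>)"
    if "\<mu> \<noteq> 0" for \<mu>
    using poly_wronskian_reflect[of P' k P Q' Q \<mu>] reflect p q that by (simp add: P Q P' Q')
  then obtain z where "cmod z \<le> 1" "poly (wronskian P Q) z = 0 \<or> poly (wronskian P' Q') z = 0"
    using root_in_unit_disc_or_reflected[of 2 "wronskian P' Q'" "-1" "2 * k" "wronskian P Q"] \<open>2 \<le> k\<close>
    by auto
  then show ?thesis
    using that P Q P' Q' by blast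
qed

theorem proposition3:
  shows "\<exists>\<eta>0::real. \<eta>0 < 1 \<and>
    (\<forall>\<eta>::real. \<eta> > 0 \<longrightarrow>
      (\<exists>K::nat. \<forall>k\<ge>K. \<exists>p q. hom_poly2 k p \<and> hom_poly2 k q \<and>
          (\<forall>z1 z2. norm2 z1 z2 = 1 \<longrightarrow>
              \<eta> \<le> norm2 (p z1 z2) (q z1 z2) \<and> norm2 (p z1 z2) (q z1 z2) \<le> 1))
      \<longrightarrow> \<eta> \<le> \<eta>0)"
proof (intro exI[of _ "9999 / 10000"] conjI allI impI)
  fix \<eta> :: real
  assume "\<eta> > 0" and "\<exists>K::nat. \<forall>k\<ge>K. \<exists>p q. hom_poly2 k p \<and> hom_poly2 k q \<and>
          (\<forall>z1 z2. norm2 z1 z2 = 1 \<longrightarrow>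
              \<eta> \<le> norm2 (p z1 z2) (q z1 z2) \<and> norm2 (p z1 z2) (q z1 z2) \<le> 1)"
  then obtain K where "\<forall>k\<ge>K. \<exists>p q. hom_poly2 k p \<and> hom_poly2 k q \<and> sphere_to_annulus \<eta> p q"
    unfolding sphere_to_annulus_def by blast
  then obtain k p q where "2 \<le> k" and p: "hom_poly2 k p" and q: "hom_poly2 k q"
    and S: "sphere_to_annulus \<eta> p q"
    by (metis max.cobounded1 max.cobounded2)
  obtain P Q z where "cmod z \<le> 1" and root: "poly (wronskian P Q) z = 0"
    and "poly P = (\<lambda>x. p x 1) \<and> poly Q = (\<lambda>x. q x 1) \<or> poly P = (\<lambda>x. p 1 x) \<and> poly Q = (\<lambda>x. q 1 x)"
    using hom_poly2_wronskian_root[OF p q \<open>2 \<le> k\<close>] by blast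
  moreover have "chart_annulus \<eta> k (\<lambda>x. p x 1) (\<lambda>x. q x 1)"
    using sphere_to_annulus_imp_chart_annulus[OF p q S] \<open>\<eta> > 0\<close> by simp
  moreover have "chart_annulus \<eta> k (\<lambda>x. p 1 x) (\<lambda>x. q 1 x)"
    using sphere_to_annulus_imp_chart_annulus[OF hom_poly2_swap[OF p] hom_poly2_swap[OF q]
        sphere_to_annulus_swap[OF S]] \<open>\<eta> > 0\<close> by simp
  ultimately have "chart_annulus \<eta> k (poly P) (poly Q)"
    by auto
  with \<open>2 \<le> k\<close> \<open>cmod z \<le> 1\<close> root show "\<eta> \<le> 9999 / 10000"
    using wronskian_no_root_in_unit_disc by force
qed simp

end
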